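(* Consider a firm $i$ in period $t$ whose planned (expected) output is $$Y^e_{it}=F\big(K_{it},\exp\{\varphi_{it}\}L_{it},M_{it}\big)\exp\{\omega_{it}\},$$ and whose realized output is $Y_{it}=Y^e_{it}\exp\{\eta_{it}\}$, where $K_{it}$ is physical capital, $L_{it}$ labor, $M_{it}$ materials, $\omega_{it}$ Hicks-neutral (factor-neutral) productivity, $\varphi_{it}$ Harrod-neutral (labor-augmenting) productivity, and $\eta_{it}$ a transitory shock. Assume: (A1) $K_{it}$ is a dynamic input chosen at time $t-1$ (so it is predetermined at $t$, with $K_{it}=I_{it-1}+(1-\delta)K_{it-1}$), while $L_{it}$ and $M_{it}$ are freely varying inputs chosen statically at time $t$ with no dynamic implications; (A2) $F$ is continuous, differentiable, positively monotone and concave in its inputs, and strongly separable as $F(K,\exp\{\varphi\}L,M)=G\big(K,H(\exp\{\varphi\}L,M)\big)$ with $H$ homogeneous of some degree, and $F$ has a known parametric form; (A3) $\omega_{it}$ and $\varphi_{it}$ follow controlled first-order Markov processes, $\mathcal{P}_\omega(\omega_{it}\mid\Xi_{it-1})=\mathcal{P}_\omega(\omega_{it}\mid\omega_{it-1},X_{it-1})$ and $\mathcal{P}_\varphi(\varphi_{it}\mid\Xi_{it-1})=\mathcal{P}_\varphi(\varphi_{it}\mid\varphi_{it-1},Z_{it-1})$, where $\Xi_{it}$ is the firm's time-$t$ information set and $X_{it},Z_{it}$ are productivity-modifying activities, and $\eta_{it}$ is i.i.d. with $\mathcal{P}_\eta(\eta_{it}\mid\Xi_{it})=\mathcal{P}_\eta(\eta_{it})$;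 (A5) risk-neutral firms face perfectly competitive factor markets with firm-common prices $P^L_t,P^M_t$, and a monopolistically competitive output market with downward-sloping inverse residual demand $P^Y_{it}=D(Y^e_{it},U_{it})$, where $U_{it}\in\Xi_{it}$ is a vector of demand shifters known to the firm. The firm chooses $(L_{it},M_{it})$ to maximize expected static profit $\theta\, D(Y^e_{it},U_{it})\,Y^e_{it}-P^L_tL_{it}-P^M_tM_{it}$ with $\theta=\mathbb{E}[\exp\{\eta_{it}\}\mid\Xi_{it}]$, so that the first-order conditions are $P^Y_{it}\,\theta\,\mu_{it}^{-1}\,\partial Y^e_{it}/\partial M_{it}=P^M_t$ and $P^Y_{it}\,\theta\,\mu_{it}^{-1}\,\partial Y^e_{it}/\partial L_{it}=P^L_t$, where $\mu_{it}=\mu(P^Y_{it},U_{it})=\big(1+1/\delta(P^Y_{it},U_{it})\big)^{-1}$ is the markup and $\delta(P^Y_{it},U_{it})<-1$ is the price elasticity of demand. Suppose in addition that (i) $\partial^2\ln F/(\partial\ln L\,\partial\ln M)\ge 0$, and (ii) $0\le \partial\ln\mu/\partial\ln P^Y\le 1$. Then the firm's conditional material demand $M_{it}=\mathcal{M}(K_{it},P^L_t,P^M_t,U_{it},\varphi_{it},\omega_{it})$ is weakly increasing in $\omega_{it}$ and in $\varphi_{it}$, conditional on $(K_{it},P^L_t,P^M_t,U_{it})$.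
   Context: Firms are indexed by $i$ and time by $t$. $\omega_{it}$ enters output log-additively (Hicks-neutral productivity) and $\varphi_{it}$ multiplies labor inside $F$ (labor-augmenting, Harrod-neutral productivity). The "conditional material demand" is the optimal $M_{it}$ solving the static profit maximization above given the state $(K_{it},P^L_t,P^M_t,U_{it},\varphi_{it},\omega_{it})$. *)

theory Defs
  imports "HOL-Analysis.Analysis"
begin

text \<open>Positive orthant of input space (K, effective labor exp(phi)*L, M).\<close>
definition PosOrth :: "(real \<times> real \<times> real) set" where
  "PosOrth = {(k, x, m). 0 < k \<and> 0 < x \<and> 0 < m}"

definition expected_output ::
  "(real \<Rightarrow> real \<Rightarrow> real \<Rightarrow> real) \<Rightarrow> real \<Rightarrow> real \<Rightarrow> real \<Rightarrow> real \<Rightarrow> real \<Rightarrow> real" where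
  "expected_output F K phi omega L M = F K (exp phi * L) M * exp omega"

definition static_profit ::
  "(real \<Rightarrow> real \<Rightarrow> real \<Rightarrow> real) \<Rightarrow> (real \<Rightarrow> 'u \<Rightarrow> real) \<Rightarrow> real \<Rightarrow>
   real \<Rightarrow> real \<Rightarrow> real \<Rightarrow> 'u \<Rightarrow> real \<Rightarrow> real \<Rightarrow> real \<Rightarrow> real \<Rightarrow> real" where
  "static_profit F D theta K PL PM U phi omega L M =
     (let Y = expected_output F K phi omega L M in theta * D Y U * Y - PL * L - PM * M)"

definition static_optimum ::
  "(real \<Rightarrow> real \<Rightarrow> real \<Rightarrow> real) \<Rightarrow> (real \<Rightarrow> 'u \<Rightarrow> real) \<Rightarrow> real \<Rightarrow>
   real \<Rightarrow> real \<Rightarrow> real \<Rightarrow> 'u \<Rightarrow> real \<Rightarrow> real \<Rightarrow> real \<Rightarrow> real \<Rightarrow> bool" where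
  "static_optimum F D theta K PL PM U phi omega L M \<longleftrightarrow>
     0 < L \<and> 0 < M \<and>
     (\<forall>L' M'. 0 < L' \<and> 0 < M' \<longrightarrow>
        static_profit F D theta K PL PM U phi omega L' M' \<le> static_profit F D theta K PL PM U phi omega L M)"

definition markup :: "(real \<Rightarrow> 'u \<Rightarrow> real) \<Rightarrow> real \<Rightarrow> 'u \<Rightarrow> real" where
  "markup del P U = inverse (1 + inverse (del P U))"

definition homogeneous_pos :: "(real \<Rightarrow> real \<Rightarrow> real) \<Rightarrow> real \<Rightarrow> bool" where
  "homogeneous_pos H r \<longleftrightarrow>
     (\<forall>t X M. 0 < t \<and> 0 < X \<and> 0 < M \<longrightarrow> H (t * X) (t * M) = t powr r * H X M)"

definition logF :: "(real \<Rightarrow> real \<Rightarrow> real \<Rightarrow> real) \<Rightarrow> real \<Rightarrow> real \<Rightarrow> real \<Rightarrow> real" where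
  "logF F K l m = ln (F K (exp l) (exp m))"

end

theory Submission
  imports Defs
begin

(* In the coordinates a = phi + ln L (log effective labour) and m = ln M, expected profit is
   theta R(omega + f(a, m)) - P^L exp(a - phi) - P^M exp m, with R(y) = D(e^y) e^y the revenue at
   log output y and f = ln F at fixed capital. Condition (i) makes f supermodular.
   Downward-sloping demand and condition (ii) give R' = R / mu(D(e^y)) with mu(D(e^y)) positive and
   falling in y, so R is increasing with increasing differences and the revenue term is
   supermodular in (omega, a, m). Labour-augmenting productivity enters only the labour cost,
   whose negative has increasing differences in (phi, a). Profit is therefore supermodular
   jointly in the state (phi, omega) and the choice (a, m); by Topkis' argument the join of the
   optima at a lower and a higher state is optimal at the higher state, and uniqueness of the
   optimum forces ln M <= ln M'. *)

definition supermodular :: "('a::lattice \<Rightarrow> real) \<Rightarrow> bool" where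
  "supermodular f \<longleftrightarrow> (\<forall>x y. f x + f y \<le> f (sup x y) + f (inf x y))"

lemma supermodularI:
  "(\<And>x y. f x + f y \<le> f (sup x y) + f (inf x y)) \<Longrightarrow> supermodular f"
  unfolding supermodular_def by blast

lemma supermodularD:
  "supermodular f \<Longrightarrow> f x + f y \<le> f (sup x y) + f (inf x y)"
  unfolding supermodular_def by blast

lemma supermodular_add:
  "supermodular f \<Longrightarrow> supermodular g \<Longrightarrow> supermodular (\<lambda>x. f x + g x)"
  unfolding supermodular_def by (smt (verit))

lemma supermodular_cmult:
  assumes "0 \<le> c" "supermodular f"
  shows "supermodular (\<lambda>x. c * f x)"
proof (rule supermodularI)
  fix x y
  show "c * f x + c * f y \<le> c * f (sup x y) + c * f (inf x y)"
    using mult_left_mono[OF supermodularD[OF assms(2)] assms(1), of x y]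
    by (simp add: distrib_left)
qed

lemma supermodular_comp_lattice_hom:
  assumes "supermodular f"
    and "\<And>x y. h (sup x y) = sup (h x) (h y)" "\<And>x y. h (inf x y) = inf (h x) (h y)"
  shows "supermodular (\<lambda>x. f (h x))"
  using assms unfolding supermodular_def by metis

lemma supermodular_real: "supermodular (f :: real \<Rightarrow> real)"
  unfolding supermodular_def sup_real_def inf_real_def by (simp add: max_def min_def)

lemma supermodular_real_pairI:
  fixes f :: "real \<times> real \<Rightarrow> real"
  assumes "\<And>l l' m m'. l \<le> l' \<Longrightarrow> m' \<le> m \<Longrightarrow> f (l, m) - f (l, m') \<le> f (l', m) - f (l', m')"
  shows "supermodular f"
proof (rule supermodularI)
  fix x y :: "real \<times> real"
  obtain l m l' m' where xy: "x = (l, m)" "y = (l', m')" by fastforce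
  show "f x + f y \<le> f (sup x y) + f (inf x y)"
    using assms[of l l' m' m] assms[of l' l m m'] unfolding xy
    by (cases "l \<le> l'"; cases "m' \<le> m") (auto simp: sup_real_def inf_real_def)
qed

lemma supermodular_comp_increasing_differences:
  fixes g :: "'a::lattice \<Rightarrow> real" and R :: "real \<Rightarrow> real"
  assumes g: "supermodular g" "mono g"
    and R: "mono R" "\<And>a b d. a \<le> b \<Longrightarrow> 0 \<le> d \<Longrightarrow> R (a + d) - R a \<le> R (b + d) - R b"
  shows "supermodular (\<lambda>x. R (g x))"
proof (rule supermodularI)
  fix x y
  define d where "d = g x - g (inf x y)"
  have "0 \<le> d" "g (inf x y) \<le> g y" "g y + d \<le> g (sup x y)"
    using supermodularD[OF g(1), of x y] monoD[OF g(2)] unfolding d_def by auto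
  then have "R (g (inf x y) + d) - R (g (inf x y)) \<le> R (g y + d) - R (g y)"
    and "R (g y + d) \<le> R (g (sup x y))"
    using R by (auto dest: monoD)
  then show "R (g x) + R (g y) \<le> R (g (sup x y)) + R (g (inf x y))"
    unfolding d_def by simp
qed

lemma supermodular_argmax_sup:
  fixes P :: "'t::lattice \<times> 'x::lattice \<Rightarrow> real"
  assumes "supermodular P" "t \<le> t'"
    and max: "\<And>z. P (t, z) \<le> P (t, x)" and max': "\<And>z. P (t', z) \<le> P (t', x')"
  shows "P (t', z) \<le> P (t', sup x x')"
proof -
  have "P (t, x) + P (t', x') \<le> P (t', sup x x') + P (t, inf x x')"
    using supermodularD[OF assms(1), of "(t, x)" "(t', x')"] \<open>t \<le> t'\<close>
    by (simp add: sup_absorb2 inf_absorb1)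
  then show ?thesis
    using max[of "inf x x'"] max'[of z] by linarith
qed

lemma DERIV_mono_imp_increasing_differences:
  fixes f f' :: "real \<Rightarrow> real"
  assumes f': "\<And>x. (f has_real_derivative f' x) (at x)"
    and mono_f': "\<And>x y. x \<le> y \<Longrightarrow> f' x \<le> f' y"
    and "a \<le> b" "0 \<le> d"
  shows "f (a + d) - f a \<le> f (b + d) - f b"
proof -
  have "((\<lambda>x. f (x + d) - f x) has_real_derivative f' (x + d) - f' x) (at x)" for x
    using f'[of x] DERIV_shift[THEN iffD1, OF f'[of "x + d"]] by (intro derivative_intros)
  moreover have "0 \<le> f' (x + d) - f' x" for x
    using mono_f' \<open>0 \<le> d\<close> by simp
  ultimately show ?thesis
    using DERIV_nonneg_imp_nondecreasing[OF \<open>a \<le> b\<close>, of "\<lambda>x. f (x + d) - f x"] by blast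
qed

lemma mixed_deriv_nonneg_imp_increasing_differences:
  fixes f :: "real \<Rightarrow> real \<Rightarrow> real"
  assumes diff_l: "\<And>l m. (\<lambda>l'. f l' m) differentiable (at l)"
    and diff_lm: "\<And>l m. (\<lambda>m'. deriv (\<lambda>l'. f l' m') l) differentiable (at m)"
    and cross: "\<And>l m. 0 \<le> deriv (\<lambda>m'. deriv (\<lambda>l'. f l' m') l) m"
    and "l \<le> l'" "m' \<le> m"
  shows "f l m - f l m' \<le> f l' m - f l' m'"
proof -
  define fl where "fl x y = deriv (\<lambda>l'. f l' y) x" for x y
  have fl_mono: "fl x m' \<le> fl x m" for x
    using DERIV_nonneg_imp_nondecreasing[OF \<open>m' \<le> m\<close>, of "fl x"] diff_lm cross
    unfolding fl_def by (metis DERIV_deriv_iff_real_differentiable)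
  have "((\<lambda>x. f x m - f x m') has_real_derivative fl x m - fl x m') (at x)" for x
    using diff_l unfolding fl_def
    by (intro derivative_intros) (simp_all add: DERIV_deriv_iff_real_differentiable)
  with fl_mono show ?thesis
    using DERIV_nonneg_imp_nondecreasing[OF \<open>l \<le> l'\<close>, of "\<lambda>x. f x m - f x m'"] by fastforce
qed

definition log_revenue :: "(real \<Rightarrow> 'u \<Rightarrow> real) \<Rightarrow> 'u \<Rightarrow> real \<Rightarrow> real" where
  "log_revenue D U y = D (exp y) U * exp y"

lemma markup_pos: "del P U < -1 \<Longrightarrow> 0 < markup del P U"
  unfolding markup_def
  by (smt (verit, best) inverse_less_iff_less_neg inverse_minus_eq inverse_1 inverse_positive_iff_positive)

lemma log_deriv_nonneg_imp_mono_on: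
  fixes g :: "real \<Rightarrow> real"
  assumes diff: "\<And>p. (\<lambda>p. ln (g (exp p))) differentiable (at p)"
    and deriv_nonneg: "\<And>p. 0 \<le> deriv (\<lambda>p. ln (g (exp p))) p"
    and pos: "\<And>P. 0 < P \<Longrightarrow> 0 < g P"
  shows "mono_on {0<..} g"
proof (rule mono_onI)
  fix P P' :: real
  assume "P \<in> {0<..}" "P \<le> P'"
  then have "ln P \<le> ln P'" "0 < P" "0 < P'" by auto
  then have "ln (g (exp (ln P))) \<le> ln (g (exp (ln P')))"
    using DERIV_nonneg_imp_nondecreasing[of "ln P" "ln P'" "\<lambda>p. ln (g (exp p))"] diff deriv_nonneg
    by (metis DERIV_deriv_iff_real_differentiable)
  then show "g P \<le> g P'"
    using pos \<open>0 < P\<close> \<open>0 < P'\<close> by simp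
qed

lemma log_revenue_has_real_derivative:
  assumes D': "((\<lambda>Y. D Y U) has_real_derivative D') (at (exp y))"
    and elasticity: "del (D (exp y) U) U = D (exp y) U / (exp y * D')"
    and D_pos: "0 < D (exp y) U"
  shows "(log_revenue D U has_real_derivative log_revenue D U y / markup del (D (exp y) U) U) (at y)"
proof -
  have "((\<lambda>y. D (exp y) U) has_real_derivative D' * exp y) (at y)"
    using DERIV_chain2[OF D' DERIV_exp] .
  then have "(log_revenue D U has_real_derivative D' * exp y * exp y + D (exp y) U * exp y) (at y)"
    unfolding log_revenue_def[abs_def] by (auto intro!: derivative_eq_intros)
  moreover have "D' * exp y * exp y + D (exp y) U * exp y = log_revenue D U y / markup del (D (exp y) U) U"
    using D_pos unfolding log_revenue_def markup_def elasticity by (simp add: field_simps)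
  ultimately show ?thesis by simp
qed

lemma log_revenue_mono_increasing_differences:
  assumes D_pos: "\<And>Y. 0 < Y \<Longrightarrow> 0 < D Y U"
    and D_deriv: "\<And>Y. 0 < Y \<Longrightarrow> \<exists>D'. ((\<lambda>y. D y U) has_real_derivative D') (at Y) \<and>
                                         del (D Y U) U = D Y U / (Y * D')"
    and elastic: "\<And>P. 0 < P \<Longrightarrow> del P U < -1"
    and markup_log_diff: "\<And>p. (\<lambda>p. ln (markup del (exp p) U)) differentiable (at p)"
    and markup_log_deriv: "\<And>p. 0 \<le> deriv (\<lambda>p. ln (markup del (exp p) U)) p"
  shows "mono (log_revenue D U)"
    and "\<And>a b d. a \<le> b \<Longrightarrow> 0 \<le> d \<Longrightarrow>
           log_revenue D U (a + d) - log_revenue D U a \<le> log_revenue D U (b + d) - log_revenue D U b"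
proof -
  have "\<forall>Y. \<exists>D'. 0 < Y \<longrightarrow> ((\<lambda>y. D y U) has_real_derivative D') (at Y) \<and>
                                del (D Y U) U = D Y U / (Y * D')"
    using D_deriv by blast
  then obtain D' where D': "\<And>Y. 0 < Y \<Longrightarrow> ((\<lambda>y. D y U) has_real_derivative D' Y) (at Y) \<and>
                                       del (D Y U) U = D Y U / (Y * D' Y)"
    unfolding choice_iff by blast
  have D'_neg: "D' Y < 0" if "0 < Y" for Y
  proof (rule ccontr)
    assume "\<not> D' Y < 0"
    then have "0 \<le> D Y U / (Y * D' Y)"
      using D_pos[OF that] that by simp
    then show False
      using D'[OF that] elastic[OF D_pos[OF that]] by simp
  qed
  have price_antimono: "D (exp y') U \<le> D (exp y) U" if "y \<le> y'" for y y'
  proof (rule DERIV_nonpos_imp_nonincreasing[where f = "\<lambda>Y. D Y U"])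
    show "exp y \<le> exp y'"
      using that by simp
    fix Y
    assume "exp y \<le> Y"
    then have "0 < Y"
      using exp_gt_zero[of y] by linarith
    then show "\<exists>d. ((\<lambda>Y. D Y U) has_real_derivative d) (at Y) \<and> d \<le> 0"
      using D' D'_neg less_imp_le by blast
  qed
  have markup_mono: "mono_on {0<..} (\<lambda>P. markup del P U)"
    using markup_pos[of del _ U] elastic
    by (intro log_deriv_nonneg_imp_mono_on markup_log_diff markup_log_deriv) blast
  define q where "q y = inverse (markup del (D (exp y) U) U)" for y
  have markup_price_pos: "0 < markup del (D (exp y) U) U" for y
    by (rule markup_pos[of del, OF elastic[OF D_pos[OF exp_gt_zero]]])
  then have q_pos: "0 < q y" for y
    unfolding q_def by simp
  have q_mono: "q y \<le> q y'" if "y \<le> y'" for y y'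
    unfolding q_def using markup_price_pos D_pos price_antimono[OF that]
    by (intro le_imp_inverse_le mono_onD[OF markup_mono]) auto
  have R': "(log_revenue D U has_real_derivative log_revenue D U y * q y) (at y)" for y
    using log_revenue_has_real_derivative[of D U "D' (exp y)" y del] D' D_pos
    unfolding q_def by (simp add: divide_inverse)
  have R_pos: "0 < log_revenue D U y" for y
    unfolding log_revenue_def using D_pos by simp
  have "0 \<le> log_revenue D U y * q y" for y
    using R_pos q_pos by (simp add: less_imp_le)
  then show R_mono: "mono (log_revenue D U)"
    using DERIV_nonneg_imp_nondecreasing R' by (metis monoI)
  have "log_revenue D U y * q y \<le> log_revenue D U y' * q y'" if "y \<le> y'" for y y'
    using monoD[OF R_mono that] q_mono[OF that] R_pos q_pos by (simp add: mult_mono less_imp_le)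
  then show "log_revenue D U (a + d) - log_revenue D U a \<le> log_revenue D U (b + d) - log_revenue D U b"
    if "a \<le> b" "0 \<le> d" for a b d
    using DERIV_mono_imp_increasing_differences[OF R' _ that] by blast
qed

lemma mono_logF:
  assumes pos: "\<And>x m. 0 < x \<Longrightarrow> 0 < m \<Longrightarrow> 0 < F K x m"
    and mono_x: "\<And>x x' m. 0 < x \<Longrightarrow> x \<le> x' \<Longrightarrow> 0 < m \<Longrightarrow> F K x m \<le> F K x' m"
    and mono_m: "\<And>x m m'. 0 < x \<Longrightarrow> 0 < m \<Longrightarrow> m \<le> m' \<Longrightarrow> F K x m \<le> F K x m'"
  shows "mono (\<lambda>(l, m). logF F K l m)"
proof (rule monoI)
  fix z z' :: "real \<times> real"
  assume "z \<le> z'"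
  then obtain l m l' m' where z: "z = (l, m)" "z' = (l', m')" "l \<le> l'" "m \<le> m'"
    by (cases z, cases z') auto
  have "F K (exp l) (exp m) \<le> F K (exp l') (exp m')"
    using mono_x[of "exp l" "exp l'" "exp m"] mono_m[of "exp l'" "exp m" "exp m'"] z by force
  then show "(\<lambda>(l, m). logF F K l m) z \<le> (\<lambda>(l, m). logF F K l m) z'"
    using pos unfolding z logF_def by simp
qed

definition log_profit ::
  "(real \<Rightarrow> real \<Rightarrow> real \<Rightarrow> real) \<Rightarrow> (real \<Rightarrow> 'u \<Rightarrow> real) \<Rightarrow> real \<Rightarrow>
   real \<Rightarrow> real \<Rightarrow> real \<Rightarrow> 'u \<Rightarrow> (real \<times> real) \<times> (real \<times> real) \<Rightarrow> real" where
  "log_profit F D theta K PL PM U = (\<lambda>((phi, omega), (a, m)).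
     static_profit F D theta K PL PM U phi omega (exp (a - phi)) (exp m))"

lemma log_profit_eq:
  assumes "\<And>x m. 0 < x \<Longrightarrow> 0 < m \<Longrightarrow> 0 < F K x m"
  shows "log_profit F D theta K PL PM U ((phi, omega), (a, m)) =
           theta * log_revenue D U (omega + logF F K a m) - PL * exp (a - phi) - PM * exp m"
proof -
  have "expected_output F K phi omega (exp (a - phi)) (exp m) = exp (omega + logF F K a m)"
    using assms[of "exp a" "exp m"]
    unfolding expected_output_def logF_def by (simp add: exp_add mult_exp_exp)
  then show ?thesis
    unfolding log_profit_def static_profit_def log_revenue_def Let_def by simp
qed

lemma static_optimum_iff_log_argmax:
  "static_optimum F D theta K PL PM U phi omega L M \<longleftrightarrow>
     0 < L \<and> 0 < M \<and>
     (\<forall>z. log_profit F D theta K PL PM U ((phi, omega), z) \<le>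
          log_profit F D theta K PL PM U ((phi, omega), (phi + ln L, ln M)))"
proof (cases "0 < L \<and> 0 < M")
  case True
  have "log_profit F D theta K PL PM U ((phi, omega), (phi + ln L', ln M')) =
          static_profit F D theta K PL PM U phi omega L' M'" if "0 < L'" "0 < M'" for L' M'
    using that unfolding log_profit_def by simp
  moreover have "log_profit F D theta K PL PM U ((phi, omega), z) =
          static_profit F D theta K PL PM U phi omega (exp (fst z - phi)) (exp (snd z))" for z
    unfolding log_profit_def by (simp add: case_prod_beta)
  ultimately show ?thesis
    using True unfolding static_optimum_def by (metis exp_gt_zero prod.collapse)
qed (auto simp: static_optimum_def)

lemma supermodular_labour_cost:
  assumes "0 \<le> PL"
  shows "supermodular (\<lambda>(phi, a). - (PL * exp (a - phi)))"
proof (rule supermodular_real_pairI, unfold case_prod_conv)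
  fix phi phi' a a' :: real
  assume "phi \<le> phi'" "a' \<le> a"
  then have "(exp a - exp a') / exp phi' \<le> (exp a - exp a') / exp phi"
    by (intro divide_left_mono) auto
  then have "PL * ((exp a - exp a') / exp phi') \<le> PL * ((exp a - exp a') / exp phi)"
    using assms by (rule mult_left_mono)
  then show "- (PL * exp (a - phi)) - - (PL * exp (a' - phi)) \<le>
             - (PL * exp (a - phi')) - - (PL * exp (a' - phi'))"
    by (simp add: exp_diff algebra_simps diff_divide_distrib)
qed

lemma supermodular_log_profit:
  assumes F_pos: "\<And>x m. 0 < x \<Longrightarrow> 0 < m \<Longrightarrow> 0 < F K x m"
    and "0 \<le> theta" "0 \<le> PL"
    and R_mono: "mono (log_revenue D U)"
    and R_incdiff: "\<And>a b d. a \<le> b \<Longrightarrow> 0 \<le> d \<Longrightarrow>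
           log_revenue D U (a + d) - log_revenue D U a \<le> log_revenue D U (b + d) - log_revenue D U b"
    and f_mono: "mono (\<lambda>(l, m). logF F K l m)"
    and f_supermodular: "supermodular (\<lambda>(l, m). logF F K l m)"
  shows "supermodular (log_profit F D theta K PL PM U)"
proof -
  define f where "f = (\<lambda>(l, m). logF F K l m)"
  define g where "g z = snd (fst z) + f (snd z)" for z :: "(real \<times> real) \<times> (real \<times> real)"
  define c where "c = (\<lambda>(phi, a). - (PL * exp (a - phi)))"
  have profit: "log_profit F D theta K PL PM U =
      (\<lambda>z. theta * log_revenue D U (g z) + c (fst (fst z), fst (snd z)) + - (PM * exp (snd (snd z))))"
    unfolding g_def c_def f_def by (auto simp: log_profit_eq[where F = F and K = K, OF F_pos] fun_eq_iff)
  have "supermodular g"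
    unfolding g_def
    using supermodular_comp_lattice_hom[OF supermodular_real, of "\<lambda>z. snd (fst z)"]
      supermodular_comp_lattice_hom[OF f_supermodular[folded f_def], of snd]
    by (intro supermodular_add) auto
  moreover have "mono g"
    unfolding g_def using monoD[OF f_mono[folded f_def]]
    by (intro monoI add_mono) (auto simp: less_eq_prod_def)
  ultimately have "supermodular (\<lambda>z. theta * log_revenue D U (g z))"
    using supermodular_comp_increasing_differences R_mono R_incdiff supermodular_cmult \<open>0 \<le> theta\<close> by blast
  moreover have "supermodular (\<lambda>z. c (fst (fst z), fst (snd z)))"
    using supermodular_labour_cost[OF \<open>0 \<le> PL\<close>, folded c_def]
    by (rule supermodular_comp_lattice_hom) auto
  moreover have "supermodular (\<lambda>z. - (PM * exp (snd (snd z))))"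
    by (rule supermodular_comp_lattice_hom[OF supermodular_real]) auto
  ultimately show ?thesis
    unfolding profit by (intro supermodular_add)
qed

lemma material_demand_mono:
  assumes supermodular: "supermodular (log_profit F D theta K PL PM U)"
    and opt: "static_optimum F D theta K PL PM U phi omega L M"
    and opt': "static_optimum F D theta K PL PM U phi' omega' L' M'"
    and unique': "\<And>L'' M''. static_optimum F D theta K PL PM U phi' omega' L'' M'' \<Longrightarrow> M'' = M'"
    and "phi \<le> phi'" "omega \<le> omega'"
  shows "M \<le> M'"
proof -
  define x where "x = (phi + ln L, ln M)"
  define x' where "x' = (phi' + ln L', ln M')"
  have max: "log_profit F D theta K PL PM U ((phi, omega), z) \<le>
               log_profit F D theta K PL PM U ((phi, omega), x)" for z
    using opt unfolding static_optimum_iff_log_argmax x_def by blast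
  have max': "log_profit F D theta K PL PM U ((phi', omega'), z) \<le>
                log_profit F D theta K PL PM U ((phi', omega'), x')" for z
    using opt' unfolding static_optimum_iff_log_argmax x'_def by blast
  obtain a'' m'' where sup: "sup x x' = (a'', m'')"
    by fastforce
  have "log_profit F D theta K PL PM U ((phi', omega'), z) \<le>
          log_profit F D theta K PL PM U ((phi', omega'), (a'', m''))" for z
    using supermodular_argmax_sup[OF supermodular _ max max'] \<open>phi \<le> phi'\<close> \<open>omega \<le> omega'\<close>
    unfolding sup by simp
  then have "static_optimum F D theta K PL PM U phi' omega' (exp (a'' - phi')) (exp m'')"
    unfolding static_optimum_iff_log_argmax by simp
  then have "exp m'' = M'"
    by (rule unique')
  moreover have "ln M \<le> m''"
    using sup unfolding x_def x'_def by (auto simp: sup_real_def)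
  ultimately show ?thesis
    using opt unfolding static_optimum_def by (metis exp_le_cancel_iff exp_ln)
qed

theorem proposition1:
  fixes F :: "real \<Rightarrow> real \<Rightarrow> real \<Rightarrow> real"
    and D :: "real \<Rightarrow> 'u \<Rightarrow> real"
    and del :: "real \<Rightarrow> 'u \<Rightarrow> real"
    and theta :: real
    and Ldem Mdem :: "real \<Rightarrow> real \<Rightarrow> real \<Rightarrow> 'u \<Rightarrow> real \<Rightarrow> real \<Rightarrow> real"
  assumes F_pos: "\<forall>(k, x, m) \<in> PosOrth. 0 < F k x m"
    and F_cont: "continuous_on PosOrth (\<lambda>(k, x, m). F k x m)"
    and F_diff: "\<forall>p \<in> PosOrth. (\<lambda>(k, x, m). F k x m) differentiable (at p)"
    and F_mono: "\<forall>k k' x x' m m'. 0 < k \<and> 0 < x \<and> 0 < m \<and> 0 < k' \<and> 0 < x' \<and> 0 < m' \<longrightarrow>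
                    (k < k' \<longrightarrow> F k x m < F k' x m) \<and>
                    (x < x' \<longrightarrow> F k x m < F k x' m) \<and>
                    (m < m' \<longrightarrow> F k x m < F k x m')"
    and F_concave: "concave_on PosOrth (\<lambda>(k, x, m). F k x m)"
    and F_sep: "\<exists>G H r. homogeneous_pos H r \<and>
                  (\<forall>k x m. 0 < k \<and> 0 < x \<and> 0 < m \<longrightarrow> F k x m = G k (H x m))"
    and demand: "\<forall>Y U. 0 < Y \<longrightarrow> 0 < D Y U \<and>
                  (\<exists>D'. ((\<lambda>y. D y U) has_real_derivative D') (at Y) \<and>
                        del (D Y U) U = D Y U / (Y * D'))"
    and elastic: "\<forall>P U. 0 < P \<longrightarrow> del P U < -1"
    and theta_pos: "0 < theta"
    and cond_i: "\<forall>K l m. 0 < K \<longrightarrow>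
                  (\<lambda>l'. logF F K l' m) differentiable (at l) \<and>
                  (\<lambda>m'. deriv (\<lambda>l'. logF F K l' m') l) differentiable (at m) \<and>
                  0 \<le> deriv (\<lambda>m'. deriv (\<lambda>l'. logF F K l' m') l) m"
    and cond_ii: "\<forall>P U. 0 < P \<longrightarrow>
                  (\<lambda>p. ln (markup del (exp p) U)) differentiable (at (ln P)) \<and>
                  0 \<le> deriv (\<lambda>p. ln (markup del (exp p) U)) (ln P) \<and>
                  deriv (\<lambda>p. ln (markup del (exp p) U)) (ln P) \<le> 1"
    and demand_opt: "\<forall>K PL PM U phi omega. 0 < K \<and> 0 < PL \<and> 0 < PM \<longrightarrow>
                  static_optimum F D theta K PL PM U phi omega
                    (Ldem K PL PM U phi omega) (Mdem K PL PM U phi omega)"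
    and demand_unique: "\<forall>K PL PM U phi omega L M. 0 < K \<and> 0 < PL \<and> 0 < PM \<and>
                  static_optimum F D theta K PL PM U phi omega L M \<longrightarrow>
                  L = Ldem K PL PM U phi omega \<and> M = Mdem K PL PM U phi omega"
  shows "(\<forall>K PL PM U phi omega omega'. 0 < K \<and> 0 < PL \<and> 0 < PM \<and> omega \<le> omega' \<longrightarrow>
            Mdem K PL PM U phi omega \<le> Mdem K PL PM U phi omega') \<and>
         (\<forall>K PL PM U phi phi' omega. 0 < K \<and> 0 < PL \<and> 0 < PM \<and> phi \<le> phi' \<longrightarrow>
            Mdem K PL PM U phi omega \<le> Mdem K PL PM U phi' omega)"
proof -
  have logF: "mono (\<lambda>(l, m). logF F K l m)" "supermodular (\<lambda>(l, m). logF F K l m)"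
    and F_pos_K: "\<And>x m. 0 < x \<Longrightarrow> 0 < m \<Longrightarrow> 0 < F K x m" if "0 < K" for K
  proof -
    show F_pos_K: "0 < F K x m" if "0 < x" "0 < m" for x m
      using F_pos \<open>0 < K\<close> that unfolding PosOrth_def by auto
    show "mono (\<lambda>(l, m). logF F K l m)"
    proof (rule mono_logF[where F = F and K = K, OF F_pos_K])
      show "F K x m \<le> F K x' m" if "0 < x" "x \<le> x'" "0 < m" for x x' m
        using F_mono[rule_format, of K x m K x' m] \<open>0 < K\<close> that by (cases "x = x'") auto
      show "F K x m \<le> F K x m'" if "0 < x" "0 < m" "m \<le> m'" for x m m'
        using F_mono[rule_format, of K x m K x m'] \<open>0 < K\<close> that by (cases "m = m'") auto
    qed
    show "supermodular (\<lambda>(l, m). logF F K l m)"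
      using cond_i[rule_format, OF \<open>0 < K\<close>]
      by (intro supermodular_real_pairI, unfold case_prod_conv,
          intro mixed_deriv_nonneg_imp_increasing_differences) simp_all
  qed
  have markup_log_diff: "(\<lambda>p. ln (markup del (exp p) U)) differentiable (at p)"
    and markup_log_deriv: "0 \<le> deriv (\<lambda>p. ln (markup del (exp p) U)) p" for p U
    using cond_ii[rule_format, of "exp p" U] by simp_all
  note revenue = log_revenue_mono_increasing_differences
    [OF _ _ elastic[rule_format] markup_log_diff markup_log_deriv]
  have "Mdem K PL PM U phi omega \<le> Mdem K PL PM U phi' omega'"
    if "0 < K" "0 < PL" "0 < PM" "phi \<le> phi'" "omega \<le> omega'" for K PL PM U phi phi' omega omega'
  proof (rule material_demand_mono)
    show "supermodular (log_profit F D theta K PL PM U)"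
      using theta_pos \<open>0 < PL\<close> logF[OF \<open>0 < K\<close>] revenue demand
      by (intro supermodular_log_profit[where F = F and K = K, OF F_pos_K[OF \<open>0 < K\<close>]]) auto
    show "static_optimum F D theta K PL PM U phi omega
            (Ldem K PL PM U phi omega) (Mdem K PL PM U phi omega)"
      and "static_optimum F D theta K PL PM U phi' omega'
            (Ldem K PL PM U phi' omega') (Mdem K PL PM U phi' omega')"
      using demand_opt that by simp_all
    show "M'' = Mdem K PL PM U phi' omega'"
      if "static_optimum F D theta K PL PM U phi' omega' L'' M''" for L'' M''
      using demand_unique that \<open>0 < K\<close> \<open>0 < PL\<close> \<open>0 < PM\<close> by blast
  qed fact+
  then show ?thesis
    by (meson order_refl)
qed

end
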